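(* Let $a_1\ge1$ be an integer, $\bm{x} \in \mathcal{L}(f)$, let $p$ be a prime not dividing $2(x_1^2 - a_1x_1x_0 - x_0^2)D$, let $\mathfrak{p}$ be a prime ideal of $\mathcal{O}_K$ lying over $p$, and let $v \ge 1$ be an integer. Then $\tau(\bm{x}; p^v) = 2\operatorname{ord}_{\mathfrak{p}^v}(\alpha^2)$.
   Context: Let $f := X^2 - a_1X - 1$, $D := a_1^2+4$, $K := \mathbb{Q}(\sqrt{D})$ with ring of integers $\mathcal{O}_K$, and $\alpha,\beta\in\mathcal{O}_K$ the roots of $f$ ($\alpha\beta=-1$). $\mathcal{L}(f)$ is the set of integer sequences $\bm{x}=(x_n)_{n\ge0}$ with $x_{n+2} = a_1x_{n+1} + x_n$ for all $n\ge0$. For an integer $m\ge1$, $\tau(\bm{x}; m)$ is the minimal integer $t \ge 1$ with $x_{n+t}\equiv x_n \pmod m$ for all sufficiently large $n$. $\operatorname{ord}_{\mathfrak{i}}(\theta)$ denotes the multiplicative order of $\theta$ modulo the ideal $\mathfrak{i}$. *)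

theory Defs
  imports Complex_Main "HOL-Computational_Algebra.Polynomial" "HOL-Number_Theory.Number_Theory"
begin

text \<open>Setting: f = X^2 - a1 X - 1, D = a1^2 + 4, K = Q(sqrt D), realised inside the reals.\<close>

definition discr :: "int \<Rightarrow> int" where
  "discr a1 = a1^2 + 4"

definition Kfield :: "int \<Rightarrow> real set" where
  "Kfield a1 = {of_rat r + of_rat s * sqrt (real_of_int (discr a1)) | r s. True}"

definition algebraic_integer :: "real \<Rightarrow> bool" where
  "algebraic_integer x \<longleftrightarrow> (\<exists>q :: int poly. lead_coeff q = 1 \<and> poly (map_poly of_int q) x = 0)"

definition OK :: "int \<Rightarrow> real set" where
  "OK a1 = {x \<in> Kfield a1. algebraic_integer x}"

definition is_ideal :: "int \<Rightarrow> real set \<Rightarrow> bool" where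
  "is_ideal a1 I \<longleftrightarrow> I \<subseteq> OK a1 \<and> 0 \<in> I \<and> (\<forall>x\<in>I. \<forall>y\<in>I. x + y \<in> I)
     \<and> (\<forall>x\<in>I. - x \<in> I) \<and> (\<forall>r\<in>OK a1. \<forall>x\<in>I. r * x \<in> I)"

definition is_prime_ideal :: "int \<Rightarrow> real set \<Rightarrow> bool" where
  "is_prime_ideal a1 P \<longleftrightarrow> is_ideal a1 P \<and> P \<noteq> OK a1
     \<and> (\<forall>a\<in>OK a1. \<forall>b\<in>OK a1. a * b \<in> P \<longrightarrow> a \<in> P \<or> b \<in> P)"

definition lies_over :: "real set \<Rightarrow> nat \<Rightarrow> bool" where
  "lies_over P p \<longleftrightarrow> {n :: int. real_of_int n \<in> P} = {n. int p dvd n}"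

definition gen_ideal :: "int \<Rightarrow> real set \<Rightarrow> real set" where
  "gen_ideal a1 S = \<Inter>{J. is_ideal a1 J \<and> S \<subseteq> J}"

definition ideal_mult :: "int \<Rightarrow> real set \<Rightarrow> real set \<Rightarrow> real set" where
  "ideal_mult a1 I J = gen_ideal a1 {x * y | x y. x \<in> I \<and> y \<in> J}"

primrec ideal_pow :: "int \<Rightarrow> real set \<Rightarrow> nat \<Rightarrow> real set" where
  "ideal_pow a1 I 0 = OK a1"
| "ideal_pow a1 I (Suc n) = ideal_mult a1 I (ideal_pow a1 I n)"

definition ord_ideal :: "real set \<Rightarrow> real \<Rightarrow> nat" where
  "ord_ideal I \<theta> = (LEAST t :: nat. t \<ge> 1 \<and> \<theta> ^ t - 1 \<in> I)"

definition Lf :: "int \<Rightarrow> (nat \<Rightarrow> int) set" where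
  "Lf a1 = {x. \<forall>n. x (n + 2) = a1 * x (n + 1) + x n}"

definition tau :: "(nat \<Rightarrow> int) \<Rightarrow> int \<Rightarrow> nat" where
  "tau x m = (LEAST t :: nat. t \<ge> 1 \<and> (\<exists>N. \<forall>n\<ge>N. [x (n + t) = x n] (mod m)))"

end

theory Submission
  imports Defs
begin

text \<open>
  Write \<open>\<alpha>\<^sup>n = U\<^sub>n \<alpha> + U\<^sub>n\<^sub>-\<^sub>1\<close> with \<open>(U\<^sub>n)\<close> the Lucas sequence of \<open>f\<close>.  On the sequence side,
  \<open>x\<^sub>n\<^sub>+\<^sub>t = U\<^sub>t x\<^sub>n\<^sub>+\<^sub>1 + U\<^sub>t\<^sub>-\<^sub>1 x\<^sub>n\<close>, and since \<open>x\<^sub>n\<^sub>+\<^sub>1\<^sup>2 - a\<^sub>1 x\<^sub>n\<^sub>+\<^sub>1 x\<^sub>n - x\<^sub>n\<^sup>2 = \<plusminus>(x\<^sub>1\<^sup>2 - a\<^sub>1 x\<^sub>1 x\<^sub>0 - x\<^sub>0\<^sup>2)\<close>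
  is prime to \<open>p\<close>, \<open>t\<close> is an eventual period mod \<open>p\<^sup>v\<close> iff \<open>p\<^sup>v\<close> divides \<open>U\<^sub>t\<close> and \<open>U\<^sub>t\<^sub>-\<^sub>1 - 1\<close>.
  Cassini's identity \<open>U\<^sub>t\<^sub>-\<^sub>1\<^sup>2 + a\<^sub>1 U\<^sub>t U\<^sub>t\<^sub>-\<^sub>1 - U\<^sub>t\<^sup>2 = (-1)\<^sup>t\<close> and \<open>p \<noteq> 2\<close> force every such \<open>t\<close> to be even.

  On the ideal side, for even \<open>t\<close> the same two divisibilities are equivalent to \<open>\<alpha>\<^sup>t \<equiv> 1\<close> mod
  \<open>\<pp>\<^sup>v\<close>.  As \<open>[O\<^sub>K : \<int>[\<alpha>]]\<close> divides \<open>2D\<close>, every element of \<open>O\<^sub>K\<close> is in \<open>\<int>[\<alpha>]\<close> after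
  multiplication by an integer prime to \<open>p\<close>.  If \<open>p\<close> is inert, \<open>\<pp>\<^sup>v\<close> then lies in \<open>p\<^sup>v \<int>[\<alpha>]\<close>
  (localised at \<open>p\<close>).  If \<open>p\<close> splits, \<open>\<pp>\<^sup>v\<close> lies in the kernel of \<open>\<alpha> \<mapsto> c\<close> mod \<open>p\<^sup>v\<close> for a
  Hensel lift \<open>c\<close> of a root of \<open>f\<close> mod \<open>p\<close>; then \<open>c\<^sup>t \<equiv> 1\<close>, hence \<open>(a\<^sub>1 - c)\<^sup>t \<equiv> 1\<close> as \<open>c (a\<^sub>1 - c) \<equiv> -1\<close>,
  and the two roots being distinct mod \<open>p\<close> gives both divisibilities.  So the least period is
  twice the order of \<open>\<alpha>\<^sup>2\<close>.
\<close>

section \<open>Integer and rational polynomials\<close>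

lemma map_poly_of_int_mult:
  "map_poly (of_int :: int \<Rightarrow> 'a::comm_ring_1) (p * q) = map_poly of_int p * map_poly of_int q"
  by (rule poly_eqI) (simp add: coeff_map_poly coeff_mult)

lemma map_poly_of_int_inject:
  "map_poly (of_int :: int \<Rightarrow> 'a::ring_char_0) p = map_poly of_int q \<longleftrightarrow> p = q"
  by (auto simp: poly_eq_iff coeff_map_poly)

lemma rat_poly_clear_denominators:
  fixes h :: "rat poly"
  obtains d :: int and H :: "int poly" where "d > 0" "map_poly of_int H = Polynomial.smult (of_int d) h"
proof -
  have "\<exists>d H. d > 0 \<and> map_poly (of_int :: int \<Rightarrow> rat) H = Polynomial.smult (of_int d) h"
  proof (induction h)
    case (pCons a h)
    then obtain d H where dH: "d > 0" "map_poly (of_int :: int \<Rightarrow> rat) H = Polynomial.smult (of_int d) h"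
      by blast
    obtain n b where nb: "quotient_of a = (n, b)" by force
    have "b > 0" "a = of_int n / of_int b"
      using quotient_of_denom_pos[OF nb] quotient_of_div[OF nb] by simp_all
    then have "map_poly (of_int :: int \<Rightarrow> rat) (pCons (d * n) (Polynomial.smult b H))
        = Polynomial.smult (of_int (d * b)) (pCons a h)"
      using dH by (simp add: map_poly_pCons map_poly_smult mult.commute)
    with \<open>b > 0\<close> \<open>d > 0\<close> show ?case by (metis zero_less_mult_iff)
  qed (rule exI[of _ 1], rule exI[of _ 0], simp)
  with that show ?thesis by blast
qed

lemma content_nonneg_int: "content (q :: int poly) \<ge> 0"
  by (metis normalize_content abs_ge_zero normalize_int_def)

lemma divisor_of_product_eq:
  fixes a b c d :: int
  assumes "a * b = c * d" "a dvd c" "b dvd d" "c > 0" "d > 0" "a \<ge> 0"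
  shows "a = c"
proof -
  obtain k l where "c = a * k" "d = b * l" using assms(2,3) by (elim dvdE)
  with assms(1) have "(a * b) * (k * l) = (a * b) * 1" by (simp add: algebra_simps)
  moreover have "a * b \<noteq> 0" using \<open>c = a * k\<close> \<open>d = b * l\<close> assms(4,5) by auto
  ultimately have "k * l = 1" by (simp only: mult_cancel_left) simp
  with \<open>c = a * k\<close> assms(4,6) show ?thesis
    by (metis zmult_eq_1_iff mult.right_neutral mult_minus_right neg_0_less_iff_less
        zero_le_mult_iff not_less)
qed

lemma content_monic: "lead_coeff (q :: int poly) = 1 \<Longrightarrow> content q = 1"
  using content_dvd_coeff[of q "degree q"] is_unit_content_iff content_nonneg_int[of q] by auto

lemma monic_factor_of_monic_int_poly_Ints:
  fixes q :: "int poly" and g h :: "rat poly"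
  assumes q: "lead_coeff q = 1" and gh: "map_poly of_int q = g * h" and g: "lead_coeff g = 1"
  shows "Polynomial.coeff g i \<in> \<int>"
proof -
  obtain d G where d: "d > 0" and G: "map_poly of_int G = Polynomial.smult (of_int d) g"
    by (rule rat_poly_clear_denominators)
  obtain e H where e: "e > 0" and H: "map_poly of_int H = Polynomial.smult (of_int e) h"
    by (rule rat_poly_clear_denominators)
  have "map_poly (of_int :: int \<Rightarrow> rat) (G * H) = map_poly of_int (Polynomial.smult (d * e) q)"
    using G H gh by (simp add: map_poly_of_int_mult map_poly_smult mult_ac)
  then have "G * H = Polynomial.smult (d * e) q" by (simp only: map_poly_of_int_inject)
  then have content_GH: "content G * content H = d * e"
    using d e content_monic[OF q] by (metis content_mult content_smult abs_of_pos
        mult_pos_pos normalize_int_def mult.right_neutral)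
  have lead_h: "lead_coeff h = 1"
    using arg_cong[OF gh, of lead_coeff] q g by (simp add: lead_coeff_mult degree_map_poly coeff_map_poly)
  have "lead_coeff (map_poly (of_int :: int \<Rightarrow> rat) G) = of_int d"
       "lead_coeff (map_poly (of_int :: int \<Rightarrow> rat) H) = of_int e"
    using G H d e g lead_h by simp_all
  then have "lead_coeff G = d" "lead_coeff H = e"
    by (simp_all add: degree_map_poly coeff_map_poly)
  then have "content G dvd d" "content H dvd e"
    by (metis content_dvd_coeff)+
  with content_GH d e have "content G = d"
    using content_nonneg_int[of G] by (metis divisor_of_product_eq)
  then obtain k where "Polynomial.coeff G i = d * k"
    by (metis content_dvd_coeff dvdE)
  then have "Polynomial.coeff g i = of_int k"
    using arg_cong[OF G, of "\<lambda>p. Polynomial.coeff p i"] d by (auto simp: coeff_map_poly)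
  then show ?thesis by simp
qed

lemma rational_root_of_monic_int_poly_Ints:
  fixes q :: "int poly" and x :: rat
  assumes "lead_coeff q = 1" "poly (map_poly of_int q) x = 0"
  shows "x \<in> \<int>"
proof -
  obtain h where "map_poly of_int q = [:-x, 1:] * h"
    using assms(2) poly_eq_0_iff_dvd by blast
  then have "Polynomial.coeff [:-x, 1:] 0 \<in> \<int>"
    by (rule monic_factor_of_monic_int_poly_Ints[OF assms(1)]) simp
  then show ?thesis by (metis Ints_minus coeff_pCons_0 minus_minus)
qed

lemma rat_square_Ints: "(x :: rat)\<^sup>2 \<in> \<int> \<Longrightarrow> x \<in> \<int>"
  by (rule rational_root_of_monic_int_poly_Ints[of "[:- \<lfloor>x\<^sup>2\<rfloor>, 0, 1:]"])
    (auto simp: map_poly_pCons power2_eq_square elim!: Ints_cases)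

lemma map_poly_of_rat_mult:
  "map_poly (of_rat :: rat \<Rightarrow> 'a::field_char_0) (p * q) = map_poly of_rat p * map_poly of_rat q"
  by (rule poly_eqI) (simp add: coeff_map_poly coeff_mult of_rat_sum of_rat_mult)

lemma map_poly_of_rat_add:
  "map_poly (of_rat :: rat \<Rightarrow> 'a::field_char_0) (p + q) = map_poly of_rat p + map_poly of_rat q"
  by (rule poly_eqI) (simp add: coeff_map_poly of_rat_add)

lemma linear_rat_poly_at_irrational_eq_0:
  fixes r :: "rat poly" and z :: real
  assumes "degree r \<le> 1" "z \<notin> \<rat>" "poly (map_poly of_rat r) z = 0"
  shows "r = 0"
proof -
  have r: "r = [:Polynomial.coeff r 0, Polynomial.coeff r 1:]"
    using assms(1) by (intro poly_eqI) (auto simp: coeff_pCons coeff_eq_0 split: nat.splits)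
  then have root: "of_rat (Polynomial.coeff r 0) + z * of_rat (Polynomial.coeff r 1) = 0"
    using assms(3) by (metis map_poly_pCons map_poly_0 of_rat_0 poly_pCons poly_0 mult_zero_right add_0_right)
  have "Polynomial.coeff r 1 = 0"
  proof (rule ccontr)
    assume "Polynomial.coeff r 1 \<noteq> 0"
    with root have "z = of_rat (- Polynomial.coeff r 0 / Polynomial.coeff r 1)"
      by (simp add: of_rat_divide of_rat_minus field_simps)
    with assms(2) show False by simp
  qed
  with root r show ?thesis by simp
qed

lemma quadratic_dvd_of_common_irrational_root:
  fixes g Q :: "rat poly" and z :: real
  assumes "degree g = 2" "z \<notin> \<rat>"
    and "poly (map_poly of_rat g) z = 0" "poly (map_poly of_rat Q) z = 0"
  shows "g dvd Q"
proof -
  have "Q = g * (Q div g) + Q mod g" by simp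
  then have "poly (map_poly of_rat (Q mod g)) z = 0"
    using assms(3,4) by (metis map_poly_of_rat_add map_poly_of_rat_mult poly_add poly_mult
        mult_zero_left add_0_left)
  moreover have "degree (Q mod g) \<le> 1"
    using degree_mod_less[of g Q] assms(1) by (cases "Q mod g = 0") force+
  ultimately have "Q mod g = 0"
    using assms(2) by (intro linear_rat_poly_at_irrational_eq_0)
  then show ?thesis by (simp add: mod_eq_0_iff_dvd)
qed

lemma poly_map_poly_of_rat_of_rat:
  "poly (map_poly (of_rat :: rat \<Rightarrow> 'a::field_char_0) p) (of_rat x) = of_rat (poly p x)"
  by (induction p) (simp_all add: map_poly_pCons of_rat_add of_rat_mult)

lemma poly_map_poly_real_of_int:
  "poly (map_poly real_of_int q) y = poly (map_poly of_rat (map_poly (of_int :: int \<Rightarrow> rat) q)) y"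
  by (simp add: map_poly_map_poly o_def)

section \<open>Lucas sequences and the recurrence\<close>

fun lucas :: "int \<Rightarrow> nat \<Rightarrow> int" where
  "lucas a 0 = 0"
| "lucas a (Suc 0) = 1"
| "lucas a (Suc (Suc n)) = a * lucas a (Suc n) + lucas a n"

text \<open>\<open>lucas a n\<close> is the Lucas sequence \<open>U\<^sub>n(a, -1)\<close>, and \<open>lucas_prev a n\<close> is \<open>U\<^sub>n\<^sub>-\<^sub>1\<close>,
  extended by \<open>U\<^sub>-\<^sub>1 = 1\<close>.\<close>

definition lucas_prev :: "int \<Rightarrow> nat \<Rightarrow> int" where
  "lucas_prev a n = lucas a (Suc n) - a * lucas a n"

lemma lucas_prev_0 [simp]: "lucas_prev a 0 = 1"
  by (simp add: lucas_prev_def)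

lemma lucas_prev_Suc [simp]: "lucas_prev a (Suc n) = lucas a n"
  by (cases n) (simp_all add: lucas_prev_def)

lemma lucas_Suc: "lucas a (Suc n) = a * lucas a n + lucas_prev a n"
  by (simp add: lucas_prev_def)

lemma power_eq_lucas_plus_multiple:
  fixes \<gamma> :: "'b :: comm_ring_1"
  shows "\<exists>r. \<gamma> ^ n = of_int (lucas a n) * \<gamma> + of_int (lucas_prev a n)
              + (\<gamma> * \<gamma> - of_int a * \<gamma> - 1) * r"
proof (induction n)
  case 0
  show ?case by (auto intro: exI[of _ 0])
next
  case (Suc n)
  then obtain r where r: "\<gamma> ^ n = of_int (lucas a n) * \<gamma> + of_int (lucas_prev a n)
      + (\<gamma> * \<gamma> - of_int a * \<gamma> - 1) * r" ..
  have "\<gamma> ^ Suc n = of_int (lucas a (Suc n)) * \<gamma> + of_int (lucas_prev a (Suc n))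
      + (\<gamma> * \<gamma> - of_int a * \<gamma> - 1) * (of_int (lucas a n) + \<gamma> * r)"
    unfolding power_Suc r lucas_Suc lucas_prev_Suc by (simp add: algebra_simps)
  then show ?case ..
qed

corollary power_eq_lucas:
  fixes \<gamma> :: "'b :: comm_ring_1"
  assumes "\<gamma> * \<gamma> = of_int a * \<gamma> + 1"
  shows "\<gamma> ^ n = of_int (lucas a n) * \<gamma> + of_int (lucas_prev a n)"
  using power_eq_lucas_plus_multiple[of \<gamma> n a] assms by auto

corollary power_cong_lucas:
  fixes c m :: int
  assumes "[c * c = a * c + 1] (mod m)"
  shows "[c ^ n = lucas a n * c + lucas_prev a n] (mod m)"
proof -
  obtain r where "c ^ n = lucas a n * c + lucas_prev a n + (c * c - a * c - 1) * r"
    using power_eq_lucas_plus_multiple[of c n a] by auto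
  moreover have "m dvd c * c - a * c - 1"
    using assms by (simp add: cong_iff_dvd_diff algebra_simps)
  then have "m dvd (c * c - a * c - 1) * r" by simp
  ultimately show ?thesis
    by (simp add: cong_iff_dvd_diff)
qed

lemma lucas_cassini:
  "lucas_prev a n ^ 2 + a * lucas a n * lucas_prev a n - lucas a n ^ 2 = (-1) ^ n"
  by (induction n) (simp_all add: lucas_Suc power2_eq_square algebra_simps)

lemma lucas_cong_pred:
  assumes "[lucas a (Suc i) = lucas a (Suc j)] (mod m)"
    and "[lucas_prev a (Suc i) = lucas_prev a (Suc j)] (mod m)"
  shows "[lucas a i = lucas a j] (mod m) \<and> [lucas_prev a i = lucas_prev a j] (mod m)"
proof -
  have "[lucas a (Suc i) - a * lucas_prev a (Suc i) = lucas a (Suc j) - a * lucas_prev a (Suc j)] (mod m)"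
    using assms by (intro cong_diff cong_mult cong_refl)
  with assms(2) show ?thesis by (simp add: lucas_Suc)
qed

lemma lucas_cong_shift:
  assumes "[lucas a i = lucas a j] (mod m)" "[lucas_prev a i = lucas_prev a j] (mod m)" "i \<le> j"
  shows "[lucas a (j - i) = 0] (mod m) \<and> [lucas_prev a (j - i) = 1] (mod m)"
  using assms
proof (induction i arbitrary: j)
  case 0
  then show ?case by (simp add: cong_sym)
next
  case (Suc i)
  then obtain j' where "j = Suc j'" "i \<le> j'"
    by (metis Suc_le_D Suc_le_mono)
  with Suc.prems lucas_cong_pred[of a i j' m] Suc.IH[of j'] show ?case
    by simp
qed

lemma lucas_period_exists:
  fixes m :: int
  assumes "m > 0"
  shows "\<exists>t \<ge> 1. m dvd lucas a t \<and> m dvd lucas_prev a t - 1"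
proof -
  define pair where "pair n = (lucas a n mod m, lucas_prev a n mod m)" for n
  have "range pair \<subseteq> {0..<m} \<times> {0..<m}"
    using assms by (auto simp: pair_def)
  then have "\<not> inj pair"
    using finite_subset infinite_UNIV_nat finite_imageD by blast
  then obtain i j where "i < j" "pair i = pair j"
    by (metis inj_def linorder_neqE_nat)
  then have "[lucas a (j - i) = 0] (mod m) \<and> [lucas_prev a (j - i) = 1] (mod m)"
    by (intro lucas_cong_shift) (simp_all add: pair_def cong_def)
  then have "m dvd lucas a (j - i)" "m dvd lucas_prev a (j - i) - 1"
    by (simp_all add: cong_iff_dvd_diff)
  with \<open>i < j\<close> show ?thesis by (intro exI[of _ "j - i"]) simp
qed

lemma lucas_period_even:
  fixes m :: int
  assumes "m dvd lucas a t" "m dvd lucas_prev a t - 1" "\<not> m dvd 2"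
  shows "even t"
proof (rule ccontr)
  assume "odd t"
  have "(-1) ^ t - 1 = (lucas_prev a t - 1) * (lucas_prev a t + 1)
      + lucas a t * (a * lucas_prev a t - lucas a t)"
    using lucas_cassini[of a t] by (simp add: power2_eq_square algebra_simps)
  with assms(1,2) have "m dvd (-1) ^ t - 1" by simp
  with \<open>odd t\<close> assms(3) show False by simp
qed

lemma Lf_shift:
  assumes "x \<in> Lf a"
  shows "x (n + t) = lucas a t * x (Suc n) + lucas_prev a t * x n"
proof (induction t arbitrary: n)
  case (Suc t)
  have "x (Suc (Suc n)) = a * x (Suc n) + x n"
    using assms by (simp add: Lf_def)
  with Suc.IH[of "Suc n"] show ?case by (simp add: lucas_Suc algebra_simps)
qed simp

lemma Lf_form:
  assumes "x \<in> Lf a"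
  shows "x (Suc n) ^ 2 - a * x (Suc n) * x n - x n ^ 2 = (-1) ^ n * (x 1 ^ 2 - a * x 1 * x 0 - x 0 ^ 2)"
proof (induction n)
  case (Suc n)
  have "x (Suc (Suc n)) = a * x (Suc n) + x n"
    using assms by (simp add: Lf_def)
  with Suc.IH show ?case by (simp add: power2_eq_square algebra_simps)
qed simp

lemma Lf_eventually_periodic_iff:
  fixes m :: int
  assumes x: "x \<in> Lf a" and coprime: "coprime m (x 1 ^ 2 - a * x 1 * x 0 - x 0 ^ 2)"
  shows "(\<exists>N. \<forall>n\<ge>N. [x (n + t) = x n] (mod m)) \<longleftrightarrow> m dvd lucas a t \<and> m dvd lucas_prev a t - 1"
proof
  assume "\<exists>N. \<forall>n\<ge>N. [x (n + t) = x n] (mod m)"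
  then obtain N where N: "\<And>n. n \<ge> N \<Longrightarrow> [x (n + t) = x n] (mod m)" by blast
  define u w where "u = lucas a t" and "w = lucas_prev a t - 1"
  let ?X = "x N" and ?Y = "x (Suc N)" and ?Z = "x (Suc (Suc N))"
  have Z: "?Z = a * ?Y + ?X"
    using x by (simp add: Lf_def)
  have d1: "m dvd u * ?Y + w * ?X" and d2: "m dvd u * ?Z + w * ?Y"
    using N[of N] N[of "Suc N"] Lf_shift[OF x, of N t] Lf_shift[OF x, of "Suc N" t]
    by (simp_all add: u_def w_def cong_iff_dvd_diff algebra_simps)
  define Q where "Q = ?Y ^ 2 - a * ?Y * ?X - ?X ^ 2"
  text \<open>Cramer's rule for the two congruences, whose determinant is \<open>\<plusminus>Q\<close>.\<close>
  have "Q * u = ?Y * (u * ?Y + w * ?X) - ?X * (u * ?Z + w * ?Y)"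
       "Q * w = ?Y * (u * ?Z + w * ?Y) - ?Z * (u * ?Y + w * ?X)"
    unfolding Q_def Z by (simp_all add: power2_eq_square algebra_simps)
  with d1 d2 have "m dvd Q * u" "m dvd Q * w"
    by (metis dvd_diff dvd_mult)+
  moreover have "coprime m Q"
    using coprime unfolding Q_def Lf_form[OF x] by simp
  ultimately show "m dvd lucas a t \<and> m dvd lucas_prev a t - 1"
    by (simp add: u_def w_def coprime_dvd_mult_right_iff)
next
  assume "m dvd lucas a t \<and> m dvd lucas_prev a t - 1"
  then have "m dvd lucas a t * x (Suc n) + (lucas_prev a t - 1) * x n" for n
    by simp
  then have "[x (n + t) = x n] (mod m)" for n
    using Lf_shift[OF x, of n t] by (simp add: cong_iff_dvd_diff algebra_simps)
  then show "\<exists>N. \<forall>n\<ge>N. [x (n + t) = x n] (mod m)" by blast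
qed

lemma tau_eq_Least_lucas_period:
  fixes m :: int
  assumes "x \<in> Lf a" "coprime m (x 1 ^ 2 - a * x 1 * x 0 - x 0 ^ 2)"
  shows "tau x m = (LEAST t. t \<ge> 1 \<and> m dvd lucas a t \<and> m dvd lucas_prev a t - 1)"
  unfolding tau_def using Lf_eventually_periodic_iff[OF assms] by simp

lemma Least_even_eq_double:
  fixes S :: "nat \<Rightarrow> bool"
  assumes "\<exists>t. S t" "\<And>t. S t \<Longrightarrow> even t"
  shows "(LEAST t. S t) = 2 * (LEAST s. S (2 * s))"
proof -
  have "S (LEAST t. S t)"
    using assms(1) by (rule LeastI_ex)
  moreover obtain s0 where s0: "(LEAST t. S t) = 2 * s0"
    using assms(2)[OF calculation] by (elim evenE)
  ultimately have "(LEAST s. S (2 * s)) = s0"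
    by (metis (mono_tags, lifting) Least_equality Least_le mult_le_cancel1 zero_less_numeral)
  with s0 show ?thesis by simp
qed

section \<open>Roots of \<open>f\<close> modulo prime powers\<close>

lemma root_mod_p_simple:
  assumes "int p dvd c * c - a * c - 1" "\<not> int p dvd 2 * discr a"
  shows "\<not> int p dvd 2 * c - a"
proof
  assume "int p dvd 2 * c - a"
  then have "int p dvd (2 * c - a) * (2 * c - a) - 4 * (c * c - a * c - 1)"
    using assms(1) by (rule dvd_diff[OF dvd_mult2 dvd_mult])
  also have "(2 * c - a) * (2 * c - a) - 4 * (c * c - a * c - 1) = discr a"
    by (simp add: discr_def power2_eq_square algebra_simps)
  finally show False
    using assms(2) by simp
qed

lemma hensel_step:
  assumes p: "prime p" and "j \<ge> 1"
    and root: "int p ^ j dvd c * c - a * c - 1" and simple: "\<not> int p dvd 2 * c - a"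
  obtains c' where "int p ^ Suc j dvd c' * c' - a * c' - 1" "int p ^ j dvd c' - c"
proof -
  obtain m where m: "c * c - a * c - 1 = int p ^ j * m"
    using root by (elim dvdE)
  have "coprime (2 * c - a) (int p)"
    using p simple by (simp add: prime_imp_coprime coprime_commute)
  then obtain s where "[(2 * c - a) * s = 1] (mod int p)"
    using cong_solve_coprime_int by blast
  then have "int p dvd (2 * c - a) * s - 1"
    by (simp add: cong_iff_dvd_diff)
  then obtain r where "(2 * c - a) * s - 1 = int p * r"
    by (elim dvdE)
  then have r: "(2 * c - a) * s = 1 + int p * r"
    by simp
  obtain i where i: "j = Suc i"
    using \<open>j \<ge> 1\<close> by (metis Suc_le_D One_nat_def)
  text \<open>Newton's step \<open>c' = c - f(c) / f'(c)\<close>, with \<open>s\<close> an inverse of \<open>f'(c) = 2 c - a\<close> mod \<open>p\<close>.\<close>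
  define c' where "c' = c - m * s * int p ^ j"
  have "c' * c' - a * c' - 1 = (c * c - a * c - 1) - m * int p ^ j * ((2 * c - a) * s)
      + (m * s) * (m * s) * (int p ^ j * int p ^ j)"
    unfolding c'_def by (simp add: algebra_simps)
  also have "\<dots> = int p ^ Suc j * (m * s * m * s * int p ^ i - m * r)"
    unfolding m r i by (simp add: algebra_simps)
  finally have "int p ^ Suc j dvd c' * c' - a * c' - 1"
    by simp
  moreover have "int p ^ j dvd c' - c"
    by (simp add: c'_def)
  ultimately show ?thesis
    using that by blast
qed

lemma hensel_lift:
  assumes p: "prime p" and root: "int p dvd c0 * c0 - a * c0 - 1" and simple: "\<not> int p dvd 2 * c0 - a"
  shows "\<exists>c. int p ^ k dvd c * c - a * c - 1 \<and> int p dvd c - c0"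
proof (induction k)
  case 0
  show ?case by (intro exI[of _ c0]) simp
next
  case (Suc k)
  then obtain c where c: "int p ^ k dvd c * c - a * c - 1" "int p dvd c - c0"
    by blast
  show ?case
  proof (cases "k = 0")
    case True
    with root show ?thesis by (intro exI[of _ c0]) simp
  next
    case False
    have "\<not> int p dvd 2 * c - a"
    proof
      assume "int p dvd 2 * c - a"
      then have "int p dvd (2 * c - a) - 2 * (c - c0)"
        using c(2) by (rule dvd_diff[OF _ dvd_mult])
      with simple show False by (simp add: algebra_simps)
    qed
    with p False c(1) obtain c' where c': "int p ^ Suc k dvd c' * c' - a * c' - 1" "int p ^ k dvd c' - c"
      by (elim hensel_step) simp_all
    have "int p dvd c' - c"
      using c'(2) False by (meson dvd_power dvd_trans neq0_conv)
    then have "int p dvd (c' - c) + (c - c0)"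
      using c(2) by (rule dvd_add)
    with c'(1) show ?thesis by auto
  qed
qed

text \<open>If \<open>f = X\<^sup>2 - a X - 1\<close> has the simple root \<open>c\<close> mod \<open>m\<close>, then so has \<open>c' = a - c\<close>, and
  \<open>c c' \<equiv> -1\<close>; for even \<open>t\<close>, \<open>c\<^sup>t \<equiv> 1\<close> therefore forces \<open>c'\<^sup>t \<equiv> 1\<close> as well, and the two resulting
  linear congruences for \<open>(U\<^sub>t, U\<^sub>t\<^sub>-\<^sub>1)\<close> have determinant \<open>c - c' = 2 c - a\<close>.\<close>

lemma lucas_cong_of_simple_root:
  fixes c m :: int
  assumes root: "[c * c = a * c + 1] (mod m)" and simple: "coprime m (2 * c - a)"
    and "even t" and pow: "[lucas a t * c + lucas_prev a t = 1] (mod m)"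
  shows "m dvd lucas a t \<and> m dvd lucas_prev a t - 1"
proof -
  define c' where "c' = a - c"
  have root': "[c' * c' = a * c' + 1] (mod m)"
    using root unfolding c'_def cong_iff_dvd_diff by (simp add: algebra_simps)
  have ct: "[c ^ t = 1] (mod m)"
    using power_cong_lucas[OF root, of t] pow by (rule cong_trans)
  have "c * c' - (-1) = - (c * c - (a * c + 1))"
    by (simp add: c'_def algebra_simps)
  with root have "[c * c' = -1] (mod m)"
    unfolding cong_iff_dvd_diff by (simp only: dvd_minus_iff)
  then have "[(c * c') ^ t = (-1) ^ t] (mod m)"
    by (rule cong_pow)
  with \<open>even t\<close> have cct: "[c ^ t * c' ^ t = 1] (mod m)"
    by (simp add: power_mult_distrib)
  have "[c ^ t * c' ^ t = 1 * c' ^ t] (mod m)"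
    using ct cong_refl by (rule cong_mult)
  then have "[c' ^ t = 1] (mod m)"
    using cong_trans[OF cong_sym cct] by simp
  then have pow': "[lucas a t * c' + lucas_prev a t = 1] (mod m)"
    using power_cong_lucas[OF root', of t] cong_sym cong_trans by blast
  have "[lucas a t * c + lucas_prev a t - (lucas a t * c' + lucas_prev a t) = 1 - 1] (mod m)"
    using pow pow' by (rule cong_diff)
  then have "m dvd lucas a t * (2 * c - a)"
    unfolding c'_def cong_iff_dvd_diff by (simp add: algebra_simps)
  with simple have "m dvd lucas a t"
    by (simp add: coprime_dvd_mult_left_iff)
  moreover from this pow have "m dvd lucas_prev a t - 1"
    unfolding cong_iff_dvd_diff by (metis add_diff_eq dvd_add_right_iff dvd_mult2)
  ultimately show ?thesis ..
qed

lemma norm_form_dvd_imp_dvd: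
  assumes p: "prime p" and no_root: "\<And>c. \<not> int p dvd c * c - a * c - 1"
    and norm: "int p dvd A * A + a * A * B - B * B"
  shows "int p dvd A \<and> int p dvd B"
proof -
  have pp: "prime (int p)" using p by simp
  have "int p dvd B"
  proof (rule ccontr)
    assume "\<not> int p dvd B"
    then have "coprime B (int p)"
      using pp prime_imp_coprime coprime_commute by blast
    then obtain s where "[B * s = 1] (mod int p)"
      using cong_solve_coprime_int by blast
    then have "int p dvd B * s - 1"
      by (simp add: cong_iff_dvd_diff)
    text \<open>Then \<open>c = -A s\<close> would be a root of \<open>f\<close> mod \<open>p\<close>.\<close>
    moreover have "B * B * ((- A * s) * (- A * s) - a * (- A * s) - 1)
        = (A * A + a * A * B - B * B) + (B * s - 1) * (A * A * (B * s + 1) + a * A * B)"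
      by (simp add: algebra_simps)
    ultimately have "int p dvd B * B * ((- A * s) * (- A * s) - a * (- A * s) - 1)"
      using norm by simp
    with pp \<open>\<not> int p dvd B\<close> no_root[of "- A * s"] show False
      by (meson prime_dvd_mult_iff)
  qed
  moreover have "A * A = (A * A + a * A * B - B * B) - B * (a * A - B)"
    by (simp add: algebra_simps)
  ultimately have "int p dvd A * A"
    using norm by (metis dvd_diff dvd_mult2)
  with pp show ?thesis
    using \<open>int p dvd B\<close> by (simp add: prime_dvd_mult_iff)
qed

lemma prime_power_dvd_mult_cancel:
  assumes "prime p" "\<not> int p dvd M"
  shows "int p ^ k dvd M * X \<longleftrightarrow> int p ^ k dvd X"
proof -
  have "coprime (int p) M"
    using assms by (simp add: prime_imp_coprime)
  then show ?thesis
    by (simp add: coprime_dvd_mult_right_iff)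
qed

section \<open>The ring of integers and its ideals\<close>

lemma gen_ideal_least: "is_ideal a1 J \<Longrightarrow> S \<subseteq> J \<Longrightarrow> gen_ideal a1 S \<subseteq> J"
  unfolding gen_ideal_def by blast

lemma mult_mem_ideal_pow_Suc: "x \<in> P \<Longrightarrow> y \<in> ideal_pow a1 P k \<Longrightarrow> x * y \<in> ideal_pow a1 P (Suc k)"
  unfolding ideal_pow.simps ideal_mult_def gen_ideal_def by blast

lemma ideal_pow_Suc_mult_closed:
  "r \<in> OK a1 \<Longrightarrow> x \<in> ideal_pow a1 P (Suc k) \<Longrightarrow> r * x \<in> ideal_pow a1 P (Suc k)"
  unfolding ideal_pow.simps ideal_mult_def gen_ideal_def is_ideal_def by blast

lemma ideal_pow_subset:
  assumes "\<And>k. k \<le> n \<Longrightarrow> is_ideal a1 (J k)" and "OK a1 \<subseteq> J 0"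
    and "\<And>k x y. k < n \<Longrightarrow> x \<in> P \<Longrightarrow> y \<in> J k \<Longrightarrow> x * y \<in> J (Suc k)"
  shows "ideal_pow a1 P n \<subseteq> J n"
proof -
  have "k \<le> n \<Longrightarrow> ideal_pow a1 P k \<subseteq> J k" for k
  proof (induction k)
    case (Suc k)
    then show ?case
      unfolding ideal_pow.simps ideal_mult_def using assms(3)[of k]
      by (intro gen_ideal_least assms(1)) auto
  qed (use assms(2) in simp)
  then show ?thesis by simp
qed

locale quadratic_field =
  fixes a1 :: int and \<alpha> :: real
  assumes a1_nonzero: "a1 \<noteq> 0" and alpha_root: "\<alpha>\<^sup>2 - of_int a1 * \<alpha> - 1 = 0"
begin

lemma alpha_square: "\<alpha> * \<alpha> = of_int a1 * \<alpha> + 1"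
  using alpha_root by (simp add: power2_eq_square algebra_simps)

lemma alpha_not_Rats: "\<alpha> \<notin> \<rat>"
proof
  assume "\<alpha> \<in> \<rat>"
  then obtain x :: rat where x: "\<alpha> = of_rat x" by (elim Rats_cases)
  then have "of_rat (x * x - of_int a1 * x - 1) = (0 :: real)"
    using alpha_square by (simp add: of_rat_diff of_rat_mult)
  then have root: "x * x - of_int a1 * x - 1 = 0" by simp
  have "x \<in> \<int>"
    by (rule rational_root_of_monic_int_poly_Ints[of "[:-1, -a1, 1:]"])
      (use root in \<open>simp_all add: map_poly_pCons algebra_simps\<close>)
  then obtain k where "x = of_int k" by (elim Ints_cases)
  with root have "of_int (k * (k - a1)) = (of_int 1 :: rat)"
    by (simp add: algebra_simps)
  then have "k * (k - a1) = 1" by (simp only: of_int_eq_iff)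
  with a1_nonzero show False
    using zmult_eq_1_iff by fastforce
qed

lemma rat_coords_unique:
  fixes u v u' v' :: rat
  assumes "of_rat u + of_rat v * \<alpha> = of_rat u' + of_rat v' * \<alpha>"
  shows "u = u' \<and> v = v'"
proof (cases "v = v'")
  case False
  with assms have "\<alpha> = of_rat ((u' - u) / (v - v'))"
    by (simp add: of_rat_divide of_rat_diff field_simps)
  with alpha_not_Rats show ?thesis by simp
qed (use assms in simp)

lemma int_coords_unique:
  assumes "of_int A + of_int B * \<alpha> = of_int A' + of_int B' * \<alpha>"
  shows "A = A' \<and> B = B'"
  using rat_coords_unique[of "of_int A" "of_int B" "of_int A'" "of_int B'"] assms by simp

lemma coords_not_Rats:
  assumes "v \<noteq> 0"
  shows "of_rat u + of_rat v * \<alpha> \<notin> \<rat>"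
proof
  assume "of_rat u + of_rat v * \<alpha> \<in> \<rat>"
  then obtain w where "of_rat u + of_rat v * \<alpha> = of_rat w + of_rat 0 * \<alpha>"
    by (auto elim: Rats_cases)
  with assms show False
    using rat_coords_unique by blast
qed

lemma Kfield_iff: "z \<in> Kfield a1 \<longleftrightarrow> (\<exists>u v :: rat. z = of_rat u + of_rat v * \<alpha>)"
proof -
  have "(2 * \<alpha> - of_int a1)\<^sup>2 = real_of_int (discr a1)"
    using alpha_square by (simp add: discr_def power2_eq_square algebra_simps)
  then have sqrt_D: "sqrt (real_of_int (discr a1)) = \<bar>2 * \<alpha> - of_int a1\<bar>"
    by (metis real_sqrt_abs)
  have "\<exists>e :: rat. e * e = 1 \<and> sqrt (real_of_int (discr a1)) = of_rat e * (2 * \<alpha> - of_int a1)"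
  proof (cases "2 * \<alpha> - of_int a1 \<ge> 0")
    case True
    with sqrt_D show ?thesis by (intro exI[of _ 1]) simp
  next
    case False
    with sqrt_D show ?thesis by (intro exI[of _ "-1"]) simp
  qed
  then obtain e :: rat where e: "e * e = 1" "sqrt (real_of_int (discr a1)) = of_rat e * (2 * \<alpha> - of_int a1)"
    by blast
  have "of_rat r + of_rat s * sqrt (real_of_int (discr a1))
      = of_rat (r - s * e * of_int a1) + of_rat (2 * s * e) * \<alpha>" for r s
    unfolding e(2) by (simp add: of_rat_diff of_rat_mult algebra_simps)
  moreover have "of_rat u + of_rat v * \<alpha>
      = of_rat (u + v * of_int a1 / 2) + of_rat (v * e / 2) * sqrt (real_of_int (discr a1))" for u v
  proof -
    have "of_rat (v * e / 2) * sqrt (real_of_int (discr a1)) = of_rat v * of_rat (e * e) * (2 * \<alpha> - of_int a1) / 2"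
      using e(2) by (simp add: of_rat_mult of_rat_divide)
    then show ?thesis using e(1) by (simp add: of_rat_add of_rat_mult of_rat_divide field_simps)
  qed
  ultimately show ?thesis
    unfolding Kfield_def by blast
qed

text \<open>Trace and norm of \<open>u + v\<alpha>\<close>, whose conjugate is \<open>u + v(a\<^sub>1 - \<alpha>)\<close>.\<close>

definition coord_trace :: "rat \<Rightarrow> rat \<Rightarrow> rat" where
  "coord_trace u v = 2 * u + of_int a1 * v"

definition coord_norm :: "rat \<Rightarrow> rat \<Rightarrow> rat" where
  "coord_norm u v = u * u + of_int a1 * u * v - v * v"

lemma coord_root:
  fixes u v :: rat
  defines "z \<equiv> of_rat u + of_rat v * \<alpha>"
  shows "z * z - of_rat (coord_trace u v) * z + of_rat (coord_norm u v) = 0"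
proof -
  have "z * z - of_rat (coord_trace u v) * z + of_rat (coord_norm u v)
      = of_rat v * of_rat v * (\<alpha> * \<alpha> - of_int a1 * \<alpha> - 1)"
    unfolding z_def coord_trace_def coord_norm_def
    by (simp add: of_rat_add of_rat_mult of_rat_diff algebra_simps)
  then show ?thesis by (simp add: alpha_square)
qed

lemma trace_norm_Ints_imp_OK:
  assumes "coord_trace u v \<in> \<int>" "coord_norm u v \<in> \<int>"
  shows "of_rat u + of_rat v * \<alpha> \<in> OK a1"
proof -
  obtain T N where TN: "coord_trace u v = of_int T" "coord_norm u v = of_int N"
    using assms by (elim Ints_cases)
  let ?z = "of_rat u + of_rat v * \<alpha>"
  have "poly (map_poly real_of_int [:N, -T, 1:]) ?z = 0"
    using coord_root[of u v] TN by (simp add: map_poly_pCons algebra_simps)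
  then have "algebraic_integer ?z"
    unfolding algebraic_integer_def by (intro exI[of _ "[:N, -T, 1:]"]) simp
  then show ?thesis
    unfolding OK_def Kfield_iff by blast
qed

lemma OK_imp_trace_norm_Ints:
  assumes "z \<in> OK a1"
  obtains u v where "z = of_rat u + of_rat v * \<alpha>" "coord_trace u v \<in> \<int>" "coord_norm u v \<in> \<int>"
proof -
  obtain u v where z: "z = of_rat u + of_rat v * \<alpha>"
    using assms unfolding OK_def Kfield_iff by blast
  obtain q :: "int poly" where q: "lead_coeff q = 1" "poly (map_poly of_int q) z = 0"
    using assms unfolding OK_def algebraic_integer_def by blast
  define Q where "Q = map_poly (of_int :: int \<Rightarrow> rat) q"
  have Q_root: "poly (map_poly of_rat Q) z = 0"
    using q(2) by (simp add: Q_def poly_map_poly_real_of_int)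
  have "coord_trace u v \<in> \<int> \<and> coord_norm u v \<in> \<int>"
  proof (cases "v = 0")
    case True
    then have "poly Q u = 0"
      using Q_root z by (simp add: poly_map_poly_of_rat_of_rat)
    then have "u \<in> \<int>"
      using q(1) rational_root_of_monic_int_poly_Ints unfolding Q_def by blast
    with True show ?thesis
      by (simp add: coord_trace_def coord_norm_def)
  next
    case False
    with z have "z \<notin> \<rat>"
      by (simp add: coords_not_Rats)
    define g where "g = [:coord_norm u v, - coord_trace u v, 1:]"
    have "poly (map_poly of_rat g) z = 0"
      using coord_root[of u v] by (simp add: g_def z map_poly_pCons of_rat_minus algebra_simps)
    then have "g dvd Q"
      using \<open>z \<notin> \<rat>\<close> Q_root by (intro quadratic_dvd_of_common_irrational_root) (simp_all add: g_def)
    then obtain h where "Q = g * h" by (elim dvdE)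
    then have "Polynomial.coeff g i \<in> \<int>" for i
      using q(1) by (intro monic_factor_of_monic_int_poly_Ints[of q]) (simp_all add: Q_def g_def)
    from this[of 0] this[of 1] show ?thesis
      by (simp add: g_def)
  qed
  with z that show ?thesis by blast
qed

lemma coord_trace_norm_discr: "coord_trace u v * coord_trace u v - 4 * coord_norm u v = of_int (discr a1) * v * v"
  unfolding coord_trace_def coord_norm_def discr_def by (simp add: algebra_simps power2_eq_square)

text \<open>This is what makes \<open>O\<^sub>K\<close> closed under addition and multiplication: the cross term
  \<open>D v v'\<close> is an integer (its square is one) of the same parity as \<open>T T'\<close>.\<close>

lemma discr_cross_term:
  assumes TN: "coord_trace u v = of_int T" "coord_norm u v = of_int N"
    and TN': "coord_trace u' v' = of_int T'" "coord_norm u' v' = of_int N'"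
  obtains F where "of_int (discr a1) * v * v' = of_int F" "even (T * T' - F)"
proof -
  have "(of_int (discr a1) * v * v')\<^sup>2 = (of_int (discr a1) * v * v) * (of_int (discr a1) * v' * v')"
    by (simp add: power2_eq_square algebra_simps)
  also have "\<dots> = of_int ((T * T - 4 * N) * (T' * T' - 4 * N'))"
    using coord_trace_norm_discr[of u v] coord_trace_norm_discr[of u' v'] TN TN' by simp
  finally have sq: "(of_int (discr a1) * v * v')\<^sup>2 = of_int ((T * T - 4 * N) * (T' * T' - 4 * N'))" .
  have "of_int (discr a1) * v * v' \<in> \<int>"
    by (rule rat_square_Ints) (simp only: sq Ints_of_int)
  then obtain F where F: "of_int (discr a1) * v * v' = of_int F" by (elim Ints_cases)
  with sq have "of_int (F * F) = (of_int ((T * T - 4 * N) * (T' * T' - 4 * N')) :: rat)"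
    by (simp add: power2_eq_square)
  then have FF: "F * F = (T * T - 4 * N) * (T' * T' - 4 * N')"
    by (simp only: of_int_eq_iff)
  have "(F + T * T') * (F - T * T') = F * F - (T * T') * (T * T')"
    by (simp add: algebra_simps)
  also have "\<dots> = 4 * (4 * N * N' - N * T' * T' - N' * T * T)"
    unfolding FF by (simp add: algebra_simps)
  finally have "even ((F + T * T') * (F - T * T'))" by simp
  then have "even (F + T * T')"
    by (auto simp: even_diff)
  then have "even (T * T' - F)"
    by (simp add: even_diff add.commute)
  with F that show ?thesis by blast
qed

lemma OK_add:
  assumes "z \<in> OK a1" "z' \<in> OK a1"
  shows "z + z' \<in> OK a1"
proof -
  obtain u v T N where z: "z = of_rat u + of_rat v * \<alpha>"
    and TN: "coord_trace u v = of_int T" "coord_norm u v = of_int N"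
    using assms(1) by (elim OK_imp_trace_norm_Ints Ints_cases)
  obtain u' v' T' N' where z': "z' = of_rat u' + of_rat v' * \<alpha>"
    and TN': "coord_trace u' v' = of_int T'" "coord_norm u' v' = of_int N'"
    using assms(2) by (elim OK_imp_trace_norm_Ints Ints_cases)
  obtain F where F: "of_int (discr a1) * v * v' = of_int F" and "even (T * T' - F)"
    by (rule discr_cross_term[OF TN TN'])
  then obtain k where k: "T * T' - F = 2 * k" by (elim evenE)
  have "coord_norm (u + u') (v + v')
      = coord_norm u v + coord_norm u' v' + (coord_trace u v * coord_trace u' v' - of_int (discr a1) * v * v') / 2"
    unfolding coord_trace_def coord_norm_def discr_def by (simp add: field_simps power2_eq_square)
  also have "\<dots> = of_int (N + N' + k)"
    unfolding TN TN' F using arg_cong[OF k, of "of_int :: int \<Rightarrow> rat"] by simp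
  finally have "coord_norm (u + u') (v + v') \<in> \<int>" by simp
  moreover have "coord_trace (u + u') (v + v') = of_int (T + T')"
    using TN TN' by (simp add: coord_trace_def algebra_simps)
  ultimately have "of_rat (u + u') + of_rat (v + v') * \<alpha> \<in> OK a1"
    by (intro trace_norm_Ints_imp_OK) simp_all
  with z z' show ?thesis by (simp add: of_rat_add algebra_simps)
qed

lemma OK_mult:
  assumes "z \<in> OK a1" "z' \<in> OK a1"
  shows "z * z' \<in> OK a1"
proof -
  obtain u v T N where z: "z = of_rat u + of_rat v * \<alpha>"
    and TN: "coord_trace u v = of_int T" "coord_norm u v = of_int N"
    using assms(1) by (elim OK_imp_trace_norm_Ints Ints_cases)
  obtain u' v' T' N' where z': "z' = of_rat u' + of_rat v' * \<alpha>"
    and TN': "coord_trace u' v' = of_int T'" "coord_norm u' v' = of_int N'"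
    using assms(2) by (elim OK_imp_trace_norm_Ints Ints_cases)
  obtain F where F: "of_int (discr a1) * v * v' = of_int F" and "even (T * T' - F)"
    by (rule discr_cross_term[OF TN TN'])
  then obtain k where k: "T * T' - F = 2 * k" by (elim evenE)
  define U V where "U = u * u' + v * v'" and "V = u * v' + u' * v + of_int a1 * v * v'"
  have "z * z' = of_rat (u * u') + (of_rat u * of_rat v' + of_rat u' * of_rat v) * \<alpha>
      + of_rat v * of_rat v' * (\<alpha> * \<alpha>)"
    unfolding z z' by (simp add: of_rat_mult algebra_simps)
  also have "\<dots> = of_rat U + of_rat V * \<alpha>"
    unfolding alpha_square U_def V_def by (simp add: of_rat_add of_rat_mult algebra_simps)
  finally have "z * z' = of_rat U + of_rat V * \<alpha>" .
  moreover have "coord_trace U V = (coord_trace u v * coord_trace u' v' + of_int (discr a1) * v * v') / 2"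
    unfolding U_def V_def coord_trace_def discr_def by (simp add: algebra_simps power2_eq_square)
  then have "coord_trace U V = of_int (T * T' - k)"
    unfolding TN TN' F using arg_cong[OF k, of "of_int :: int \<Rightarrow> rat"] by simp
  moreover have "coord_norm U V = coord_norm u v * coord_norm u' v'"
    unfolding U_def V_def coord_norm_def by (simp add: algebra_simps)
  ultimately show ?thesis
    using trace_norm_Ints_imp_OK[of U V] TN TN' by simp
qed

lemma int_alpha_in_OK: "of_int A + of_int B * \<alpha> \<in> OK a1"
  using trace_norm_Ints_imp_OK[of "of_int A" "of_int B"]
  by (simp add: coord_trace_def coord_norm_def)

lemma int_in_OK: "of_int A \<in> OK a1"
  using int_alpha_in_OK[of A 0] by simp

lemma coord_denominator_dvd_discr:
  assumes "coord_trace u v = of_int T" "coord_norm u v = of_int N" "quotient_of v = (a, b)"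
  shows "b dvd discr a1"
proof -
  have b: "b > 0" "v = of_int a / of_int b" "coprime a b"
    using quotient_of_denom_pos quotient_of_div quotient_of_coprime assms(3) by blast+
  have "of_int (discr a1 * (a * a)) = of_int (discr a1) * (v * of_int b) * (v * of_int b)"
    using b(1,2) by simp
  also have "\<dots> = (of_int (discr a1) * v * v) * (of_int b * of_int b)"
    by (simp add: algebra_simps)
  also have "\<dots> = of_int ((T * T - 4 * N) * (b * b))"
    using coord_trace_norm_discr[of u v] assms(1,2) by simp
  finally have "discr a1 * (a * a) = (T * T - 4 * N) * (b * b)"
    by (simp only: of_int_eq_iff)
  then have "b * b dvd discr a1 * (a * a)" by simp
  moreover have "coprime (b * b) (a * a)"
    using b(3) by (simp add: coprime_commute)
  ultimately have "b * b dvd discr a1"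
    by (simp add: coprime_dvd_mult_left_iff)
  then show ?thesis
    by (rule dvd_mult_left)
qed

lemma OK_denominator:
  assumes "z \<in> OK a1"
  obtains A B M :: int where "M dvd 2 * discr a1" "of_int M * z = of_int A + of_int B * \<alpha>"
proof -
  obtain u v where z: "z = of_rat u + of_rat v * \<alpha>" and "coord_trace u v \<in> \<int>" "coord_norm u v \<in> \<int>"
    using assms by (rule OK_imp_trace_norm_Ints)
  then obtain T N where TN: "coord_trace u v = of_int T" "coord_norm u v = of_int N"
    by (elim Ints_cases)
  obtain a b where ab: "quotient_of v = (a, b)" by force
  have "of_int (2 * b) * u = of_int (b * T - a1 * a)" "of_int (2 * b) * v = of_int (2 * a)"
    using TN(1) quotient_of_denom_pos[OF ab] quotient_of_div[OF ab]
    unfolding coord_trace_def by (simp_all add: field_simps)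
  moreover have "of_int (2 * b) * z = of_rat (of_int (2 * b) * u) + of_rat (of_int (2 * b) * v) * \<alpha>"
    unfolding z by (simp add: of_rat_mult algebra_simps)
  ultimately have "of_int (2 * b) * z = of_int (b * T - a1 * a) + of_int (2 * a) * \<alpha>"
    by (simp only: of_rat_of_int_eq)
  moreover have "2 * b dvd 2 * discr a1"
    using coord_denominator_dvd_discr[OF TN ab] by simp
  ultimately show ?thesis using that by blast
qed

text \<open>Since \<open>[O\<^sub>K : \<int>[\<alpha>]]\<close> divides \<open>2 D\<close>, for \<open>p\<close> prime to \<open>2 D\<close> the ideals of \<open>O\<^sub>K\<close> needed below are
  described by conditions \<open>L\<close> on the \<open>\<int>[\<alpha>]\<close>-coordinates of multiples by integers prime to \<open>p\<close>.\<close>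

definition localized :: "nat \<Rightarrow> (int \<Rightarrow> int \<Rightarrow> bool) \<Rightarrow> real set" where
  "localized p L = {z \<in> OK a1. \<exists>A B M. \<not> int p dvd M \<and> of_int M * z = of_int A + of_int B * \<alpha> \<and> L A B}"

lemma OK_coprime_denominator:
  assumes "z \<in> OK a1" "\<not> int p dvd 2 * discr a1"
  obtains A B M where "\<not> int p dvd M" "of_int M * z = of_int A + of_int B * \<alpha>"
proof -
  obtain A B M where "M dvd 2 * discr a1" "of_int M * z = of_int A + of_int B * \<alpha>"
    using assms(1) by (rule OK_denominator)
  with assms(2) that show ?thesis by (meson dvd_trans)
qed

lemma int_alpha_mult:
  "(of_int A + of_int B * \<alpha>) * (of_int A' + of_int B' * \<alpha>) =
   of_int (A * A' + B * B') + of_int (A * B' + A' * B + a1 * B * B') * \<alpha>"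
proof -
  have "(of_int A + of_int B * \<alpha>) * (of_int A' + of_int B' * \<alpha>) =
     of_int A * of_int A' + (of_int A * of_int B' + of_int A' * of_int B) * \<alpha> + of_int B * of_int B' * (\<alpha> * \<alpha>)"
    by (simp add: algebra_simps)
  then show ?thesis
    unfolding alpha_square by (simp add: algebra_simps)
qed

lemma OK_subset_localized:
  assumes "\<not> int p dvd 2 * discr a1" "\<And>A B. L A B"
  shows "OK a1 \<subseteq> localized p L"
proof
  fix z assume "z \<in> OK a1"
  moreover from this obtain A B M where "\<not> int p dvd M" "of_int M * z = of_int A + of_int B * \<alpha>"
    using assms(1) by (rule OK_coprime_denominator)
  ultimately show "z \<in> localized p L"
    using assms(2) unfolding localized_def by blast
qed

lemma localized_mult:
  assumes "prime p" "x \<in> localized p L1" "y \<in> localized p L2"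
    and "\<And>A B A' B'. L1 A B \<Longrightarrow> L2 A' B' \<Longrightarrow> L3 (A * A' + B * B') (A * B' + A' * B + a1 * B * B')"
  shows "x * y \<in> localized p L3"
proof -
  obtain A B M where x: "x \<in> OK a1" "\<not> int p dvd M" "of_int M * x = of_int A + of_int B * \<alpha>" "L1 A B"
    using assms(2) unfolding localized_def by blast
  obtain A' B' M' where y: "y \<in> OK a1" "\<not> int p dvd M'" "of_int M' * y = of_int A' + of_int B' * \<alpha>" "L2 A' B'"
    using assms(3) unfolding localized_def by blast
  have "of_int (M * M') * (x * y) = (of_int M * x) * (of_int M' * y)"
    by (simp add: algebra_simps)
  also have "\<dots> = of_int (A * A' + B * B') + of_int (A * B' + A' * B + a1 * B * B') * \<alpha>"
    unfolding x(3) y(3) int_alpha_mult ..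
  finally have "of_int (M * M') * (x * y) = \<dots>" .
  moreover have "\<not> int p dvd M * M'"
    using x(2) y(2) assms(1) by (simp add: prime_dvd_mult_iff[of "int p"])
  moreover have "x * y \<in> OK a1"
    using OK_mult x(1) y(1) by blast
  ultimately show ?thesis
    using assms(4)[OF x(4) y(4)] unfolding localized_def by blast
qed

lemma localized_add:
  assumes "prime p" "x \<in> localized p L" "y \<in> localized p L"
    and lin: "\<And>A B A' B' s s'. L A B \<Longrightarrow> L A' B' \<Longrightarrow> L (s * A + s' * A') (s * B + s' * B')"
  shows "x + y \<in> localized p L"
proof -
  obtain A B M where x: "x \<in> OK a1" "\<not> int p dvd M" "of_int M * x = of_int A + of_int B * \<alpha>" "L A B"
    using assms(2) unfolding localized_def by blast
  obtain A' B' M' where y: "y \<in> OK a1" "\<not> int p dvd M'" "of_int M' * y = of_int A' + of_int B' * \<alpha>" "L A' B'"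
    using assms(3) unfolding localized_def by blast
  have "of_int (M * M') * (x + y) = of_int M' * (of_int M * x) + of_int M * (of_int M' * y)"
    by (simp add: algebra_simps)
  also have "\<dots> = of_int (M' * A + M * A') + of_int (M' * B + M * B') * \<alpha>"
    unfolding x(3) y(3) by (simp add: algebra_simps)
  finally have "of_int (M * M') * (x + y) = \<dots>" .
  moreover have "\<not> int p dvd M * M'"
    using x(2) y(2) assms(1) by (simp add: prime_dvd_mult_iff[of "int p"])
  ultimately show ?thesis
    using lin[OF x(4) y(4)] OK_add[OF x(1) y(1)] unfolding localized_def by blast
qed

lemma localized_is_ideal:
  assumes p: "prime p" "\<not> int p dvd 2 * discr a1"
    and zero: "L 0 0"
    and lin: "\<And>A B A' B' s s'. L A B \<Longrightarrow> L A' B' \<Longrightarrow> L (s * A + s' * A') (s * B + s' * B')"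
    and alpha: "\<And>A B. L A B \<Longrightarrow> L B (A + a1 * B)"
  shows "is_ideal a1 (localized p L)"
proof -
  have "(0 :: real) \<in> OK a1"
    using int_in_OK[of 0] by simp
  moreover have "\<not> int p dvd 1"
    using p(1) by (simp add: prime_nat_iff)
  moreover have "of_int 1 * (0 :: real) = of_int 0 + of_int 0 * \<alpha>"
    by simp
  ultimately have zero_mem: "0 \<in> localized p L"
    using zero unfolding localized_def by blast
  have mult_mem: "r * x \<in> localized p L" if "r \<in> OK a1" "x \<in> localized p L" for r x
  proof (rule localized_mult[OF p(1), of r "\<lambda>_ _. True" x L])
    show "r \<in> localized p (\<lambda>_ _. True)"
      using OK_subset_localized[OF p(2), of "\<lambda>_ _. True"] \<open>r \<in> OK a1\<close> by blast
    show "x \<in> localized p L"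
      by (fact that(2))
    text \<open>\<open>(A + B\<alpha>)(A' + B'\<alpha>) = A(A' + B'\<alpha>) + B(B' + (A' + a\<^sub>1 B')\<alpha>)\<close>\<close>
    show "L (A * A' + B * B') (A * B' + A' * B + a1 * B * B')" if "True" "L A' B'" for A B A' B'
      using lin[OF that(2) alpha[OF that(2)], of A B] by (simp add: algebra_simps)
  qed
  have "- x \<in> localized p L" if "x \<in> localized p L" for x
    using mult_mem[OF int_in_OK[of "-1"] that] by simp
  moreover have "localized p L \<subseteq> OK a1"
    unfolding localized_def by blast
  ultimately show ?thesis
    unfolding is_ideal_def using zero_mem mult_mem localized_add[where L=L, OF p(1) _ _ lin] by blast
qed

lemma int_alpha_in_localized_imp:
  assumes "of_int A + of_int B * \<alpha> \<in> localized p L"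
    and saturated: "\<And>M A B. \<not> int p dvd M \<Longrightarrow> L (M * A) (M * B) \<Longrightarrow> L A B"
  shows "L A B"
proof -
  obtain A' B' M where M: "\<not> int p dvd M" "of_int M * (of_int A + of_int B * \<alpha>) = of_int A' + of_int B' * \<alpha>"
    "L A' B'"
    using assms(1) unfolding localized_def by blast
  have "of_int (M * A) + of_int (M * B) * \<alpha> = of_int A' + of_int B' * \<alpha>"
    using M(2) by (simp add: algebra_simps)
  then have "M * A = A'" "M * B = B'"
    using int_coords_unique by blast+
  with M(1,3) show ?thesis by (auto intro: saturated[of M])
qed

lemma ideal_pow_mult_closed:
  "r \<in> OK a1 \<Longrightarrow> x \<in> ideal_pow a1 P k \<Longrightarrow> r * x \<in> ideal_pow a1 P k"
  by (cases k) (simp add: OK_mult, use ideal_pow_Suc_mult_closed in blast)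

end

section \<open>Powers of a prime ideal over an odd unramified prime\<close>

locale prime_over = quadratic_field +
  fixes p :: nat and P :: "real set"
  assumes prime: "prime p" and unramified: "\<not> int p dvd 2 * discr a1"
    and P_prime: "is_prime_ideal a1 P" and P_over: "lies_over P p"
begin

lemma int_mem_P_iff: "of_int n \<in> P \<longleftrightarrow> int p dvd n"
  using P_over unfolding lies_over_def by blast

lemma P_ideal: "is_ideal a1 P"
  using P_prime unfolding is_prime_ideal_def by blast

lemma P_add: "x \<in> P \<Longrightarrow> y \<in> P \<Longrightarrow> x + y \<in> P"
  and P_mult: "r \<in> OK a1 \<Longrightarrow> x \<in> P \<Longrightarrow> r * x \<in> P"
  and P_subset_OK: "P \<subseteq> OK a1"
  using P_ideal unfolding is_ideal_def by blast+

lemma int_pow_mem_ideal_pow: "of_int (int p ^ k) \<in> ideal_pow a1 P k"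
proof (induction k)
  case 0
  show ?case using int_in_OK[of 1] by simp
next
  case (Suc k)
  have "of_int (int p) \<in> P"
    using int_mem_P_iff[of "int p"] by simp
  then show ?case
    using mult_mem_ideal_pow_Suc[OF _ Suc] by simp
qed

lemma P_subset_localized_root:
  assumes "\<alpha> - of_int c \<in> P"
  shows "P \<subseteq> localized p (\<lambda>A B. int p dvd A + B * c)"
proof
  fix z assume "z \<in> P"
  then have "z \<in> OK a1" using P_subset_OK by blast
  then obtain A B M where M: "\<not> int p dvd M" "of_int M * z = of_int A + of_int B * \<alpha>"
    using unramified by (rule OK_coprime_denominator)
  have "of_int (A + B * c) = of_int M * z + of_int (- B) * (\<alpha> - of_int c)"
    using M(2) by (simp add: algebra_simps)
  also have "\<dots> \<in> P"
    using assms \<open>z \<in> P\<close> by (intro P_add P_mult int_in_OK)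
  finally have "int p dvd A + B * c"
    by (simp only: int_mem_P_iff)
  with \<open>z \<in> OK a1\<close> M show "z \<in> localized p (\<lambda>A B. int p dvd A + B * c)"
    unfolding localized_def by blast
qed

lemma P_subset_localized_inert:
  assumes "\<And>c. \<not> int p dvd c * c - a1 * c - 1"
  shows "P \<subseteq> localized p (\<lambda>A B. int p dvd A \<and> int p dvd B)"
proof
  fix z assume "z \<in> P"
  then have "z \<in> OK a1" using P_subset_OK by blast
  then obtain A B M where M: "\<not> int p dvd M" "of_int M * z = of_int A + of_int B * \<alpha>"
    using unramified by (rule OK_coprime_denominator)
  text \<open>Multiply \<open>M z\<close> by its conjugate to land in \<open>P \<inter> \<int>\<close>.\<close>
  have "of_int (A * A + a1 * A * B - B * B)
      = (of_int (A + a1 * B) + of_int (- B) * \<alpha>) * (of_int M * z)"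
    unfolding M(2) int_alpha_mult by (simp add: algebra_simps)
  also have "\<dots> \<in> P"
    using \<open>z \<in> P\<close> by (intro P_mult int_alpha_in_OK int_in_OK)
  finally have "int p dvd A * A + a1 * A * B - B * B"
    by (simp only: int_mem_P_iff)
  then have "int p dvd A \<and> int p dvd B"
    using prime assms by (intro norm_form_dvd_imp_dvd)
  with \<open>z \<in> OK a1\<close> M show "z \<in> localized p (\<lambda>A B. int p dvd A \<and> int p dvd B)"
    unfolding localized_def by blast
qed

lemma ideal_pow_subset_localized_root:
  assumes root_P: "\<alpha> - of_int c \<in> P" and root: "int p ^ k dvd c * c - a1 * c - 1"
  shows "ideal_pow a1 P k \<subseteq> localized p (\<lambda>A B. int p ^ k dvd A + B * c)"
proof (rule ideal_pow_subset)
  fix j assume "j \<le> k"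
  then have f_c: "int p ^ j dvd c * c - a1 * c - 1"
    using root by (meson le_imp_power_dvd dvd_trans)
  show "is_ideal a1 (localized p (\<lambda>A B. int p ^ j dvd A + B * c))"
  proof (rule localized_is_ideal[OF prime unramified])
    fix A B A' B' s s' :: int
    assume "int p ^ j dvd A + B * c" "int p ^ j dvd A' + B' * c"
    moreover have "(s * A + s' * A') + (s * B + s' * B') * c = s * (A + B * c) + s' * (A' + B' * c)"
      by (simp add: algebra_simps)
    ultimately show "int p ^ j dvd (s * A + s' * A') + (s * B + s' * B') * c"
      by simp
  next
    fix A B assume "int p ^ j dvd A + B * c"
    moreover have "B + (A + a1 * B) * c = c * (A + B * c) - B * (c * c - a1 * c - 1)"
      by (simp add: algebra_simps)
    ultimately show "int p ^ j dvd B + (A + a1 * B) * c"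
      using f_c by simp
  qed simp
next
  show "OK a1 \<subseteq> localized p (\<lambda>A B. int p ^ 0 dvd A + B * c)"
    using unramified by (rule OK_subset_localized) simp
next
  fix j x y assume "j < k" "x \<in> P" "y \<in> localized p (\<lambda>A B. int p ^ j dvd A + B * c)"
  have "int p ^ Suc j dvd c * c - a1 * c - 1"
    using root \<open>j < k\<close> by (meson Suc_leI le_imp_power_dvd dvd_trans)
  moreover have "x \<in> localized p (\<lambda>A B. int p dvd A + B * c)"
    using P_subset_localized_root[OF root_P] \<open>x \<in> P\<close> by blast
  ultimately show "x * y \<in> localized p (\<lambda>A B. int p ^ Suc j dvd A + B * c)"
  proof (intro localized_mult[OF prime _ \<open>y \<in> _\<close>])
    fix A B A' B'
    assume "int p ^ Suc j dvd c * c - a1 * c - 1" "int p dvd A + B * c" "int p ^ j dvd A' + B' * c"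
    moreover have "(A * A' + B * B') + (A * B' + A' * B + a1 * B * B') * c
        = (A + B * c) * (A' + B' * c) - B * B' * (c * c - a1 * c - 1)"
      by (simp add: algebra_simps)
    ultimately show "int p ^ Suc j dvd (A * A' + B * B') + (A * B' + A' * B + a1 * B * B') * c"
      by (simp add: mult_dvd_mono)
  qed
qed

lemma ideal_pow_subset_localized_inert:
  assumes "\<And>c. \<not> int p dvd c * c - a1 * c - 1"
  shows "ideal_pow a1 P k \<subseteq> localized p (\<lambda>A B. int p ^ k dvd A \<and> int p ^ k dvd B)"
proof (rule ideal_pow_subset)
  fix j
  show "is_ideal a1 (localized p (\<lambda>A B. int p ^ j dvd A \<and> int p ^ j dvd B))"
    by (rule localized_is_ideal[OF prime unramified]) simp_all
next
  show "OK a1 \<subseteq> localized p (\<lambda>A B. int p ^ 0 dvd A \<and> int p ^ 0 dvd B)"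
    using unramified by (rule OK_subset_localized) simp
next
  fix j x y assume "x \<in> P" "y \<in> localized p (\<lambda>A B. int p ^ j dvd A \<and> int p ^ j dvd B)"
  moreover have "x \<in> localized p (\<lambda>A B. int p dvd A \<and> int p dvd B)"
    using P_subset_localized_inert[OF assms] \<open>x \<in> P\<close> by blast
  ultimately show "x * y \<in> localized p (\<lambda>A B. int p ^ Suc j dvd A \<and> int p ^ Suc j dvd B)"
  proof (intro localized_mult[OF prime, of x _ y])
    fix A B A' B' :: int
    assume "int p dvd A \<and> int p dvd B" "int p ^ j dvd A' \<and> int p ^ j dvd B'"
    then have "int p ^ Suc j dvd X * Y" if "X \<in> {A, B}" "Y \<in> {A', B'}" for X Y
      using that by (auto simp: mult_dvd_mono)
    then show "int p ^ Suc j dvd A * A' + B * B' \<and> int p ^ Suc j dvd A * B' + A' * B + a1 * B * B'"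
      by (simp add: mult.commute[of A' B] mult.assoc)
  qed
qed

text \<open>\<open>(\<alpha> - c)(\<alpha> - (a\<^sub>1 - c)) = -f(c) \<in> P\<close>, so \<open>P\<close> contains one of the two factors.\<close>

lemma root_mod_p_in_P:
  assumes "int p dvd c * c - a1 * c - 1"
  obtains c0 where "int p dvd c0 * c0 - a1 * c0 - 1" "\<alpha> - of_int c0 \<in> P"
proof -
  have "(\<alpha> - of_int c) * (\<alpha> - of_int (a1 - c)) = of_int (- (c * c - a1 * c - 1))"
    using alpha_square by (simp add: algebra_simps)
  also have "\<dots> \<in> P"
    using assms by (simp only: int_mem_P_iff dvd_minus_iff)
  finally have "\<alpha> - of_int c \<in> P \<or> \<alpha> - of_int (a1 - c) \<in> P"
    using P_prime int_alpha_in_OK[of "- c" 1] int_alpha_in_OK[of "c - a1" 1]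
    unfolding is_prime_ideal_def by (simp add: algebra_simps)
  moreover have "(a1 - c) * (a1 - c) - a1 * (a1 - c) - 1 = c * c - a1 * c - 1"
    by (simp add: algebra_simps)
  ultimately show ?thesis
    using assms that by metis
qed

lemma lucas_dvd_imp_alpha_pow_mem:
  assumes "int p ^ k dvd lucas a1 t" "int p ^ k dvd lucas_prev a1 t - 1"
  shows "\<alpha> ^ t - 1 \<in> ideal_pow a1 P k"
proof -
  obtain B A where "lucas a1 t = int p ^ k * B" "lucas_prev a1 t - 1 = int p ^ k * A"
    using assms by (elim dvdE)
  then have "\<alpha> ^ t - 1 = (of_int A + of_int B * \<alpha>) * of_int (int p ^ k)"
    unfolding power_eq_lucas[OF alpha_square, of t] by (simp add: algebra_simps)
  then show ?thesis
    using ideal_pow_mult_closed[OF int_alpha_in_OK int_pow_mem_ideal_pow] by simp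
qed

lemma lifted_root_in_P:
  assumes "int p dvd c1 * c1 - a1 * c1 - 1"
  obtains c where "int p ^ k dvd c * c - a1 * c - 1" "\<alpha> - of_int c \<in> P"
proof -
  obtain c0 where c0: "int p dvd c0 * c0 - a1 * c0 - 1" "\<alpha> - of_int c0 \<in> P"
    using assms by (rule root_mod_p_in_P)
  then obtain c where c: "int p ^ k dvd c * c - a1 * c - 1" "int p dvd c - c0"
    using hensel_lift[OF prime c0(1) root_mod_p_simple[OF c0(1) unramified]] by blast
  have "of_int (c0 - c) \<in> P"
    using c(2) by (simp only: int_mem_P_iff) (simp add: dvd_diff_commute)
  with c0(2) have "(\<alpha> - of_int c0) + of_int (c0 - c) \<in> P"
    by (rule P_add)
  with c(1) that show ?thesis
    by simp
qed

lemma int_alpha_mem_ideal_pow_root_imp: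
  assumes "of_int A + of_int B * \<alpha> \<in> ideal_pow a1 P k"
    and "\<alpha> - of_int c \<in> P" "int p ^ k dvd c * c - a1 * c - 1"
  shows "int p ^ k dvd A + B * c"
proof -
  have "of_int A + of_int B * \<alpha> \<in> localized p (\<lambda>A B. int p ^ k dvd A + B * c)"
    using ideal_pow_subset_localized_root[OF assms(2,3)] assms(1) by blast
  then show ?thesis
  proof (rule int_alpha_in_localized_imp)
    fix M A B :: int
    assume "\<not> int p dvd M" "int p ^ k dvd M * A + M * B * c"
    then show "int p ^ k dvd A + B * c"
      using prime_power_dvd_mult_cancel[OF prime, of M k "A + B * c"] by (simp add: algebra_simps)
  qed
qed

lemma int_alpha_mem_ideal_pow_inert_imp:
  assumes "of_int A + of_int B * \<alpha> \<in> ideal_pow a1 P k"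
    and "\<And>c. \<not> int p dvd c * c - a1 * c - 1"
  shows "int p ^ k dvd A \<and> int p ^ k dvd B"
proof -
  have "of_int A + of_int B * \<alpha> \<in> localized p (\<lambda>A B. int p ^ k dvd A \<and> int p ^ k dvd B)"
    using ideal_pow_subset_localized_inert[OF assms(2)] assms(1) by blast
  then show ?thesis
    by (rule int_alpha_in_localized_imp) (auto simp: prime_power_dvd_mult_cancel[OF prime])
qed

lemma alpha_pow_mem_imp_lucas_dvd:
  assumes "k > 0" "even t" and mem: "\<alpha> ^ t - 1 \<in> ideal_pow a1 P k"
  shows "int p ^ k dvd lucas a1 t \<and> int p ^ k dvd lucas_prev a1 t - 1"
proof -
  have "\<alpha> ^ t - 1 = of_int (lucas_prev a1 t - 1) + of_int (lucas a1 t) * \<alpha>"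
    unfolding power_eq_lucas[OF alpha_square, of t] by (simp add: algebra_simps)
  with mem have mem': "of_int (lucas_prev a1 t - 1) + of_int (lucas a1 t) * \<alpha> \<in> ideal_pow a1 P k"
    by simp
  show ?thesis
  proof (cases "\<exists>c. int p dvd c * c - a1 * c - 1")
    case True
    then obtain c1 where "int p dvd c1 * c1 - a1 * c1 - 1" ..
    then obtain c where c: "int p ^ k dvd c * c - a1 * c - 1" "\<alpha> - of_int c \<in> P"
      by (rule lifted_root_in_P)
    have "int p dvd c * c - a1 * c - 1"
      using c(1) \<open>k > 0\<close> by (meson dvd_power dvd_trans)
    then have "coprime (int p ^ k) (2 * c - a1)"
      using prime root_mod_p_simple[OF _ unramified] by (simp add: prime_imp_coprime)
    moreover have "int p ^ k dvd (lucas_prev a1 t - 1) + lucas a1 t * c"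
      using mem' c(2,1) by (rule int_alpha_mem_ideal_pow_root_imp)
    ultimately show ?thesis
      using c(1) \<open>even t\<close>
      by (rule_tac lucas_cong_of_simple_root) (simp_all add: cong_iff_dvd_diff algebra_simps)
  next
    case False
    then have "int p ^ k dvd lucas_prev a1 t - 1 \<and> int p ^ k dvd lucas a1 t"
      using mem' by (intro int_alpha_mem_ideal_pow_inert_imp) blast+
    then show ?thesis by simp
  qed
qed

end

theorem mainTheorem10:
  fixes a1 :: int and x :: "nat \<Rightarrow> int" and p v :: nat and P :: "real set" and \<alpha> :: real
  assumes "a1 \<ge> 1"
    and "x \<in> Lf a1"
    and "\<alpha> \<in> OK a1" and "\<alpha>^2 - real_of_int a1 * \<alpha> - 1 = 0"
    and "prime p"
    and "\<not> int p dvd 2 * (x 1 ^ 2 - a1 * x 1 * x 0 - x 0 ^ 2) * discr a1"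
    and "is_prime_ideal a1 P" and "lies_over P p"
    and "v \<ge> 1"
  shows "tau x (int p ^ v) = 2 * ord_ideal (ideal_pow a1 P v) (\<alpha>^2)"
proof -
  have p: "\<not> int p dvd 2" "\<not> int p dvd x 1 ^ 2 - a1 * x 1 * x 0 - x 0 ^ 2" "\<not> int p dvd 2 * discr a1"
    using assms(6) prime_dvd_mult_iff[of "int p"] assms(5) by (auto simp only: prime_nat_int_transfer)
  interpret prime_over a1 \<alpha> p P
    using assms(1,4,5,7,8) p(3) by unfold_locales auto
  define S where "S t \<longleftrightarrow> t \<ge> 1 \<and> int p ^ v dvd lucas a1 t \<and> int p ^ v dvd lucas_prev a1 t - 1" for t
  have S_double: "S (2 * s) \<longleftrightarrow> s \<ge> 1 \<and> (\<alpha>^2) ^ s - 1 \<in> ideal_pow a1 P v" for s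
    using alpha_pow_mem_imp_lucas_dvd[of v "2 * s"] lucas_dvd_imp_alpha_pow_mem[of v "2 * s"] assms(9)
    unfolding S_def power_mult[symmetric] by auto
  have "coprime (int p) (x 1 ^ 2 - a1 * x 1 * x 0 - x 0 ^ 2)"
    using p(2) prime by (intro prime_imp_coprime) simp_all
  then have "tau x (int p ^ v) = (LEAST t. S t)"
    unfolding S_def using assms(2) by (intro tau_eq_Least_lucas_period) simp_all
  also have "\<dots> = 2 * (LEAST s. S (2 * s))"
  proof (rule Least_even_eq_double)
    show "\<exists>t. S t"
      unfolding S_def using lucas_period_exists[of "int p ^ v" a1] prime by (simp add: prime_gt_0_nat)
    show "even t" if "S t" for t
      using that p(1) assms(9) unfolding S_def
      by (intro lucas_period_even[of "int p ^ v" a1]) (auto dest: dvd_trans[OF dvd_power[of v "int p"]])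
  qed
  also have "(LEAST s. S (2 * s)) = ord_ideal (ideal_pow a1 P v) (\<alpha>^2)"
    using S_double by (simp add: ord_ideal_def)
  finally show ?thesis .
qed

end
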